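(* Let $1\le i_1<\cdots<i_k\le n+1$ and $1\le j_1<\cdots<j_k\le n+1$ with $i_r\le j_r$ for all $r$, and let $\varphi_{\underline i\underline j}\in\mathbb C[N]$ be the minor of the matrix $T=(t_{ab})$ on rows $\underline i=(i_1,\ldots,i_k)$ and columns $\underline j=(j_1,\ldots,j_k)$. Put $\lambda=(j_k,j_{k-1}+1,\ldots,j_1+k-1)$, $\mu=(i_k,i_{k-1}+1,\ldots,i_1+k-1)$ and $\lambda/\mu=\{(a,b)\mid 1\le b\le k,\ \mu_b<a\le\lambda_b\}$. Then $$\pi^*\alpha(\varphi_{\underline i\underline j})=\sum_y w[y],$$ where $y$ runs over the standard Young tableaux of shape $\lambda/\mu$, i.e. total orderings $c_1<\cdots<c_t$ of the cells of $\lambda/\mu$ increasing along rows and columns (so $(a,b)<(a+1,b)$ and $(a,b)<(a,b+1)$ whenever both cells lie in $\lambda/\mu$), and for $c_r=(a_r,b_r)$ we set $w[y]=w[a_t-b_t,\ldots,a_1-b_1]$.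
   Context: Type $\mathbb A_n$: $Q_n$ is the quiver with vertices $1,\ldots,n$ and arrows $\alpha_i:i+1\to i$; $\Lambda$ its preprojective algebra; ${\mathcal M}$ Lusztig's algebra of invariant constructible functions on the nilpotent varieties $\Lambda_{\mathbf V}$, generated by characteristic functions $\mathbf 1_{Z[i]}$ of one-point varieties; ${\mathcal M}^*$ its graded dual with product dual to $\Delta(f)(x',x'')=f(x'\oplus x'')$. $N$ is the group of unitriangular $(n+1)\times(n+1)$ matrices, $\mathbb C[N]=\mathbb C[t_{ab}\mid 1\le a<b\le n+1]$ with $t_{ab}$ the entry functions, $T$ the unitriangular matrix with entries $t_{ab}$ above the diagonal. For $1\le i\le j\le n$, $x[i,j]$ is the indecomposable representation of $Q_n$ with socle $S_i$ and top $S_j$, viewed as a $\Lambda$-module (maps for the arrows $\alpha_i^*$ being zero), and $\delta_x(f)=f(x)$. $\alpha:\mathbb C[N]\to{\mathcal M}^*$ is the algebra isomorphism (induced by $\mathbb C[N]\cong U(\mathfrak n)^*$ and Lusztig's isomorphism $U(\mathfrak n)\cong{\mathcal M}$) with $\alpha(t_{i,j+1})=\delta_{x[i,j]}$. $F=\mathbb C\langle 1,\ldots,n\rangle$, $F^*$ its graded dual with basis $w[{\mathbf i}]$ dual to words, and $\pi^*:{\mathcal M}^*\to F^*$, $\pi^*(\sigma)=\sum_{\mathbf i}\sigma(\mathbf 1_{Z[i_1]}*\cdots*\mathbf 1_{Z[i_m]})w[{\mathbf i}]$. *)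

theory Defs
  imports "HOL-Analysis.Derivative" "Jordan_Normal_Form.Determinant" "HOL-Library.Function_Algebras"
begin

text \<open>Matrices of size (n+1)x(n+1), 0-indexed internally: the paper's entry t_ab
  (1-based) is the entry (a-1, b-1).\<close>

text \<open>Chevalley generator e_a of n, the matrix unit E_{a,a+1} (1-based).\<close>
definition elemmat :: "nat \<Rightarrow> nat \<Rightarrow> complex mat" where
  "elemmat n a = mat (n+1) (n+1) (\<lambda>(p,q). if p = a - 1 \<and> q = a then 1 else 0)"

text \<open>exp(z e_a) = 1 + z e_a (square-zero).\<close>
definition expE :: "nat \<Rightarrow> nat \<Rightarrow> complex \<Rightarrow> complex mat" where
  "expE n a z = 1\<^sub>m (n+1) + z \<cdot>\<^sub>m elemmat n a"

text \<open>For a word ws = [a_1,...,a_m] (stored at positions 0..m-1) and parameters s: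
  exp(s_m e_{a_m}) ... exp(s_1 e_{a_1}).\<close>
definition wordmat :: "nat \<Rightarrow> nat list \<Rightarrow> (nat \<Rightarrow> complex) \<Rightarrow> complex mat" where
  "wordmat n ws s = fold (\<lambda>k M. expE n (ws ! k) (s k) * M) [0..<length ws] (1\<^sub>m (n+1))"

fun mixed_deriv :: "nat \<Rightarrow> ((nat \<Rightarrow> complex) \<Rightarrow> complex) \<Rightarrow> complex" where
  "mixed_deriv 0 g = g (\<lambda>_. 0)"
| "mixed_deriv (Suc m) g = deriv (\<lambda>z. mixed_deriv m (\<lambda>s. g (s(m := z)))) 0"

text \<open>pi^* alpha (f), as an element of F^* (function on words over {1..n}):
  its value on the word (i_1..i_m) is the pairing of f in C[N] = U(n)^* with
  e_{i_1} ... e_{i_m} (Lusztig's isomorphism sends e_i to 1_{Z[i]}).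
  The pairing convention is the one normalised by alpha(t_{i,j+1}) = delta_{x[i,j]}.\<close>
definition pistar_alpha :: "nat \<Rightarrow> (complex mat \<Rightarrow> complex) \<Rightarrow> nat list \<Rightarrow> complex" where
  "pistar_alpha n f ws =
     (if set ws \<subseteq> {1..n} then mixed_deriv (length ws) (\<lambda>s. f (wordmat n ws s)) else 0)"

definition minor :: "nat list \<Rightarrow> nat list \<Rightarrow> complex mat \<Rightarrow> complex" where
  "minor I J g = det (mat (length I) (length I) (\<lambda>(r,c). g $$ (I ! r - 1, J ! c - 1)))"

definition wdual :: "nat list \<Rightarrow> nat list \<Rightarrow> complex" where
  "wdual v = (\<lambda>ws. if ws = v then 1 else 0)"

text \<open>lambda_b = j_{k+1-b} + b - 1, mu_b = i_{k+1-b} + b - 1, and the skew diagram lambda/mu.\<close>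
definition skew_cells :: "nat list \<Rightarrow> nat list \<Rightarrow> (nat \<times> nat) set" where
  "skew_cells I J = {(a,b). 1 \<le> b \<and> b \<le> length I \<and>
      I ! (length I - b) + b - 1 < a \<and> a \<le> J ! (length J - b) + b - 1}"

definition std_tableaux :: "(nat \<times> nat) set \<Rightarrow> (nat \<times> nat) list set" where
  "std_tableaux C = {y. distinct y \<and> set y = C \<and>
     (\<forall>a b p q. p < length y \<and> q < length y \<and> y ! p = (a,b) \<and> y ! q = (a+1,b) \<longrightarrow> p < q) \<and>
     (\<forall>a b p q. p < length y \<and> q < length y \<and> y ! p = (a,b) \<and> y ! q = (a,b+1) \<longrightarrow> p < q)}"

definition tableau_word :: "(nat \<times> nat) list \<Rightarrow> nat list" where
  "tableau_word y = rev (map (\<lambda>(a,b). a - b) y)"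

end

theory Submission
  imports Defs
begin

(*
  Both sides are functions of a word, and both satisfy the same recursion in its last letter a.

  Left side: the value on w @ [a] is one more derivative, along exp(z e_a), of a polynomial in
  the parameters. Left multiplication by exp(z e_a) adds z times row a+1 to row a, so the minor
  on rows I becomes minor I J + z * minor I' J, where I' replaces a by a+1; the second term
  vanishes unless a is in I and a+1 is not (otherwise I' repeats a row). Hence the value of
  minor I J on w @ [a] is the value of minor I' J on w, or 0.

  Right side: c_1 contributes the last letter of w[y], and c_1 must be a minimal cell of the
  skew diagram. The part of lambda/mu coming from i_r and j_r holds the contents
  i_r, ..., j_r - 1, so a minimal cell of content a exists (and is unique) exactly when
  a = i_r < j_r and a+1 is not in I; removing it leaves the skew diagram of I' and J.

  On the empty word both sides are 1 if I = J and 0 otherwise.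
*)

section \<open>Polynomial functions and their mixed partial derivatives\<close>

(* Mixed derivatives are only linear on suitably differentiable functions; polynomials in the
   parameters are closed under partial derivatives, which is all that is needed. *)
inductive_set poly_fun :: "((nat \<Rightarrow> complex) \<Rightarrow> complex) set" where
  const: "(\<lambda>s. c) \<in> poly_fun"
| var: "(\<lambda>s. s k) \<in> poly_fun"
| add: "f \<in> poly_fun \<Longrightarrow> g \<in> poly_fun \<Longrightarrow> (\<lambda>s. f s + g s) \<in> poly_fun"
| mult: "f \<in> poly_fun \<Longrightarrow> g \<in> poly_fun \<Longrightarrow> (\<lambda>s. f s * g s) \<in> poly_fun"

lemma poly_fun_compose:
  assumes "f \<in> poly_fun" and "\<And>k. (\<lambda>s. h s k) \<in> poly_fun"
  shows "(\<lambda>s. f (h s)) \<in> poly_fun"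
  using assms(1) by induction (auto intro: poly_fun.intros assms(2))

lemma poly_fun_fun_upd:
  assumes "f \<in> poly_fun"
  shows "(\<lambda>s. f (s(j := z))) \<in> poly_fun"
proof (rule poly_fun_compose[OF assms])
  show "(\<lambda>s. (s(j := z)) k) \<in> poly_fun" for k
    by (cases "k = j") (simp_all add: poly_fun.intros)
qed

lemma poly_fun_sum:
  "finite A \<Longrightarrow> (\<And>i. i \<in> A \<Longrightarrow> f i \<in> poly_fun) \<Longrightarrow> (\<lambda>s. \<Sum>i\<in>A. f i s) \<in> poly_fun"
  by (induction A rule: finite_induct) (auto intro: poly_fun.intros)

lemma poly_fun_prod:
  "finite A \<Longrightarrow> (\<And>i. i \<in> A \<Longrightarrow> f i \<in> poly_fun) \<Longrightarrow> (\<lambda>s. \<Prod>i\<in>A. f i s) \<in> poly_fun"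
  by (induction A rule: finite_induct) (auto intro: poly_fun.intros)

lemma poly_fun_partial_deriv:
  assumes "f \<in> poly_fun"
  shows "\<exists>f'\<in>poly_fun. \<forall>s z. ((\<lambda>z. f (s(j := z))) has_field_derivative f' (s(j := z))) (at z)"
  using assms
proof induction
  case (const c)
  show ?case by (rule bexI[of _ "\<lambda>s. 0"]) (auto intro: poly_fun.intros)
next
  case (var k)
  show ?case
    by (rule bexI[of _ "\<lambda>s. if k = j then 1 else 0"]) (auto intro: poly_fun.intros)
next
  case (add f g)
  then obtain f' g' where "f' \<in> poly_fun" "g' \<in> poly_fun"
    and "\<forall>s z. ((\<lambda>z. f (s(j := z))) has_field_derivative f' (s(j := z))) (at z)"
      "\<forall>s z. ((\<lambda>z. g (s(j := z))) has_field_derivative g' (s(j := z))) (at z)"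
    by blast
  then show ?case
    by (intro bexI[of _ "\<lambda>s. f' s + g' s"] allI DERIV_add poly_fun.add) blast+
next
  case (mult f g)
  then obtain f' g' where "f' \<in> poly_fun" "g' \<in> poly_fun"
    and "\<forall>s z. ((\<lambda>z. f (s(j := z))) has_field_derivative f' (s(j := z))) (at z)"
      "\<forall>s z. ((\<lambda>z. g (s(j := z))) has_field_derivative g' (s(j := z))) (at z)"
    by blast
  then show ?case
    by (intro bexI[of _ "\<lambda>s. f' s * g s + g' s * f s"] allI DERIV_mult poly_fun.add poly_fun.mult
        mult.hyps) blast+
qed

lemma mixed_deriv_cong:
  "(\<And>s. \<forall>k\<ge>m. s k = 0 \<Longrightarrow> g s = h s) \<Longrightarrow> mixed_deriv m g = mixed_deriv m h"
proof (induction m arbitrary: g h)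
  case 0
  then show ?case using "0"[of "\<lambda>_. 0"] by simp
next
  case (Suc m)
  have "mixed_deriv m (\<lambda>s. g (s(m := z))) = mixed_deriv m (\<lambda>s. h (s(m := z)))" for z
    by (rule Suc.IH) (rule Suc.prems, auto)
  then show ?case by simp
qed

lemma mixed_deriv_zero: "mixed_deriv m (\<lambda>s. 0) = 0"
  by (induction m) simp_all

lemma mixed_deriv_poly_fun:
  assumes "f \<in> poly_fun"
  shows "(\<lambda>t. mixed_deriv m (\<lambda>s. f (\<lambda>k. if k < m then s k else t k))) \<in> poly_fun"
proof (induction m)
  case 0
  then show ?case using assms by simp
next
  case (Suc m)
  let ?Q = "\<lambda>t. mixed_deriv m (\<lambda>s. f (\<lambda>k. if k < m then s k else t k))"
  obtain Q' where "Q' \<in> poly_fun"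
    and Q': "\<And>t z. ((\<lambda>z. ?Q (t(m := z))) has_field_derivative Q' (t(m := z))) (at z)"
    using poly_fun_partial_deriv[OF Suc.IH] by blast
  have split: "(\<lambda>k. if k < Suc m then (s(m := z)) k else t k) = (\<lambda>k. if k < m then s k else (t(m := z)) k)"
    for s t z by auto
  have "mixed_deriv (Suc m) (\<lambda>s. f (\<lambda>k. if k < Suc m then s k else t k)) = deriv (\<lambda>z. ?Q (t(m := z))) 0"
    for t by (simp only: mixed_deriv.simps split)
  also have "\<dots> t = Q' (t(m := 0))" for t
    using Q' by (intro DERIV_imp_deriv)
  finally show ?case
    using poly_fun_fun_upd[OF \<open>Q' \<in> poly_fun\<close>] by simp
qed

lemma mixed_deriv_slice_differentiable:
  assumes "f \<in> poly_fun"
  shows "(\<lambda>z. mixed_deriv m (\<lambda>s. f (s(m := z)))) field_differentiable at z"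
proof -
  let ?Q = "\<lambda>t. mixed_deriv m (\<lambda>s. f (\<lambda>k. if k < m then s k else t k))"
  obtain Q' where Q': "\<And>t z. ((\<lambda>z. ?Q (t(m := z))) has_field_derivative Q' (t(m := z))) (at z)"
    using poly_fun_partial_deriv[OF mixed_deriv_poly_fun[OF assms]] by blast
  have "mixed_deriv m (\<lambda>s. f (s(m := z))) = ?Q ((\<lambda>_. 0)(m := z))" for z
    by (rule mixed_deriv_cong) (auto intro!: arg_cong[where f = f])
  then show ?thesis
    using Q' by (simp add: field_differentiable_def) blast
qed

lemma mixed_deriv_add_scaled:
  assumes "f \<in> poly_fun" "g \<in> poly_fun"
  shows "mixed_deriv m (\<lambda>s. f s + c * g s) = mixed_deriv m f + c * mixed_deriv m g"
  using assms
proof (induction m arbitrary: f g)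
  case 0
  then show ?case by simp
next
  case (Suc m)
  have "mixed_deriv m (\<lambda>s. f (s(m := z)) + c * g (s(m := z)))
      = mixed_deriv m (\<lambda>s. f (s(m := z))) + c * mixed_deriv m (\<lambda>s. g (s(m := z)))" for z
    using Suc by (intro Suc.IH poly_fun_fun_upd)
  then show ?case
    using Suc.prems by (simp add: mixed_deriv_slice_differentiable field_differentiable_mult)
qed

section \<open>Minors of the matrices along a word\<close>

lemma wordmat_Nil: "wordmat n [] s = 1\<^sub>m (n+1)"
  by (simp add: wordmat_def)

lemma wordmat_snoc: "wordmat n (ws @ [a]) s = expE n a (s (length ws)) * wordmat n ws s"
proof -
  have "fold (\<lambda>k M. expE n ((ws @ [a]) ! k) (s k) * M) [0..<length ws] (1\<^sub>m (n+1))
      = fold (\<lambda>k M. expE n (ws ! k) (s k) * M) [0..<length ws] (1\<^sub>m (n+1))"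
    by (rule fold_cong) (auto simp: nth_append)
  then show ?thesis
    by (simp add: wordmat_def)
qed

lemma expE_carrier: "expE n a z \<in> carrier_mat (n+1) (n+1)"
  by (simp add: expE_def elemmat_def)

lemma wordmat_carrier: "wordmat n ws s \<in> carrier_mat (n+1) (n+1)"
proof (induction ws rule: rev_induct)
  case Nil
  then show ?case by (simp add: wordmat_Nil)
next
  case (snoc a ws)
  then show ?case by (simp only: wordmat_snoc mult_carrier_mat[OF expE_carrier])
qed

lemma wordmat_fun_upd: "length ws \<le> j \<Longrightarrow> wordmat n ws (s(j := z)) = wordmat n ws s"
  by (induction ws rule: rev_induct) (auto simp: wordmat_Nil wordmat_snoc)

lemma poly_fun_index_mult:
  assumes "\<And>s. A s \<in> carrier_mat nr nk" "\<And>s. B s \<in> carrier_mat nk nc" "i < nr" "j < nc"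
    and "\<And>l. l < nk \<Longrightarrow> (\<lambda>s. A s $$ (i, l)) \<in> poly_fun"
    and "\<And>l. l < nk \<Longrightarrow> (\<lambda>s. B s $$ (l, j)) \<in> poly_fun"
  shows "(\<lambda>s. (A s * B s) $$ (i, j)) \<in> poly_fun"
proof -
  have "(A s * B s) $$ (i, j) = (\<Sum>l\<in>{0..<nk}. A s $$ (i, l) * B s $$ (l, j))" for s
    using assms(1)[of s] assms(2)[of s] assms(3,4) by (auto simp: scalar_prod_def intro: sum.cong)
  moreover have "(\<lambda>s. \<Sum>l\<in>{0..<nk}. A s $$ (i, l) * B s $$ (l, j)) \<in> poly_fun"
    by (rule poly_fun_sum) (auto intro: poly_fun.mult assms(5,6))
  ultimately show ?thesis
    by simp
qed

lemma poly_fun_wordmat_index: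
  "p < n+1 \<Longrightarrow> q < n+1 \<Longrightarrow> (\<lambda>s. wordmat n ws s $$ (p, q)) \<in> poly_fun"
proof (induction ws arbitrary: p q rule: rev_induct)
  case Nil
  then show ?case by (simp add: wordmat_Nil poly_fun.const)
next
  case (snoc a ws)
  have "(\<lambda>s. expE n a (s (length ws)) $$ (p, l)) \<in> poly_fun" if "l < n+1" for l
    using \<open>p < n+1\<close> that by (simp add: expE_def elemmat_def poly_fun.intros)
  with snoc show ?case
    unfolding wordmat_snoc
    by (intro poly_fun_index_mult[where A = "\<lambda>s. expE n a (s (length ws))", OF expE_carrier wordmat_carrier])
      auto
qed

lemma poly_fun_det:
  assumes "\<And>s. A s \<in> carrier_mat k k"
    and "\<And>i j. i < k \<Longrightarrow> j < k \<Longrightarrow> (\<lambda>s. A s $$ (i, j)) \<in> poly_fun"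
  shows "(\<lambda>s. det (A s)) \<in> poly_fun"
proof -
  have "(\<lambda>s. \<Sum>p \<in> {p. p permutes {0..<k}}. signof p * (\<Prod>i\<in>{0..<k}. A s $$ (i, p i))) \<in> poly_fun"
  proof (rule poly_fun_sum)
    fix p assume "p \<in> {p. p permutes {0..<k}}"
    then show "(\<lambda>s. signof p * (\<Prod>i\<in>{0..<k}. A s $$ (i, p i))) \<in> poly_fun"
      by (intro poly_fun.mult[OF poly_fun.const] poly_fun_prod assms(2)) (auto simp: permutes_in_image)
  qed (simp add: finite_permutations)
  then show ?thesis
    by (simp only: det_def'[OF assms(1)])
qed

lemma poly_fun_minor_wordmat:
  assumes "length J = length I" "\<forall>x\<in>set I. 1 \<le> x \<and> x \<le> n+1" "\<forall>x\<in>set J. 1 \<le> x \<and> x \<le> n+1"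
  shows "(\<lambda>s. minor I J (wordmat n ws s)) \<in> poly_fun"
  unfolding minor_def
proof (rule poly_fun_det)
  fix i j assume ij: "i < length I" "j < length I"
  then have "I ! i \<in> set I" "J ! j \<in> set J"
    using assms(1) by simp_all
  then have "I ! i - 1 < n+1" "J ! j - 1 < n+1"
    using assms(2,3) by fastforce+
  then show "(\<lambda>s. mat (length I) (length I) (\<lambda>(r, c). wordmat n ws s $$ (I ! r - 1, J ! c - 1)) $$ (i, j)) \<in> poly_fun"
    using ij by (simp add: poly_fun_wordmat_index)
qed simp

lemma expE_mult_index:
  assumes "M \<in> carrier_mat (n+1) (n+1)" "p < n+1" "q < n+1" "1 \<le> a" "a \<le> n"
  shows "(expE n a z * M) $$ (p, q) = M $$ (p, q) + (if p = a - 1 then z * M $$ (a, q) else 0)"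
proof -
  have "(expE n a z * M) $$ (p, q)
      = (\<Sum>t\<in>{0..<n+1}. ((if p = t then 1 else 0) + z * (if p = a - 1 \<and> t = a then 1 else 0)) * M $$ (t, q))"
    using assms by (auto simp: expE_def elemmat_def scalar_prod_def intro!: sum.cong)
  also have "\<dots> = (\<Sum>t\<in>{0..<n+1}. if p = t then M $$ (t, q) else 0)
      + (\<Sum>t\<in>{0..<n+1}. if p = a - 1 \<and> t = a then z * M $$ (t, q) else 0)"
    by (subst sum.distrib[symmetric]) (rule sum.cong, auto simp: distrib_right)
  also have "\<dots> = M $$ (p, q) + (if p = a - 1 then z * M $$ (a, q) else 0)"
    using assms by (auto simp: sum.delta)
  finally show ?thesis .
qed

lemma det_linear_row:
  assumes A: "A \<in> carrier_mat k k" and B: "B \<in> carrier_mat k k" and C: "C \<in> carrier_mat k k"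
    and r: "r < k"
    and other_rows: "\<And>i j. i < k \<Longrightarrow> j < k \<Longrightarrow> i \<noteq> r \<Longrightarrow> B $$ (i, j) = A $$ (i, j) \<and> C $$ (i, j) = A $$ (i, j)"
    and row_r: "\<And>j. j < k \<Longrightarrow> A $$ (r, j) = B $$ (r, j) + z * C $$ (r, j)"
  shows "det A = det B + z * det C"
proof -
  have "mat_delete B r j = mat_delete A r j" "mat_delete C r j = mat_delete A r j" for j
    using A B C other_rows by (auto simp: mat_delete_def)
  then have cofactor: "cofactor B r j = cofactor A r j" "cofactor C r j = cofactor A r j" for j
    by (simp_all add: cofactor_def)
  have "det A = (\<Sum>j<k. A $$ (r, j) * cofactor A r j)"
    by (rule laplace_expansion_row[OF A r])
  also have "\<dots> = (\<Sum>j<k. B $$ (r, j) * cofactor B r j) + z * (\<Sum>j<k. C $$ (r, j) * cofactor C r j)"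
    by (simp add: row_r cofactor sum.distrib sum_distrib_left algebra_simps)
  also have "\<dots> = det B + z * det C"
    by (simp add: laplace_expansion_row[OF B r] laplace_expansion_row[OF C r])
  finally show ?thesis .
qed

lemma det_zero_row:
  assumes A: "A \<in> carrier_mat k k" and i: "i < k" and zero: "\<And>j. j < k \<Longrightarrow> A $$ (i, j) = 0"
  shows "det A = 0"
  using zero by (simp add: laplace_expansion_row[OF A i])

lemma minor_not_distinct: "\<not> distinct I \<Longrightarrow> minor I J M = 0"
proof -
  assume "\<not> distinct I"
  then obtain i j where ij: "i < length I" "j < length I" "i \<noteq> j" "I ! i = I ! j"
    by (auto simp: distinct_conv_nth)
  let ?S = "mat (length I) (length I) (\<lambda>(r, c). M $$ (I ! r - 1, J ! c - 1))"
  have "row ?S i = row ?S j"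
    using ij by (auto simp: row_def)
  then show "minor I J M = 0"
    unfolding minor_def using ij by (intro det_identical_rows[of ?S "length I" i j]) auto
qed

lemma minor_expE_mult_notin:
  assumes M: "M \<in> carrier_mat (n+1) (n+1)" and a: "1 \<le> a" "a \<le> n" "a \<notin> set I"
    and len: "length J = length I"
    and I: "\<forall>x\<in>set I. 1 \<le> x \<and> x \<le> n+1" and J: "\<forall>x\<in>set J. 1 \<le> x \<and> x \<le> n+1"
  shows "minor I J (expE n a z * M) = minor I J M"
  unfolding minor_def
proof (intro arg_cong[where f = det] cong_mat refl, unfold prod.case)
  fix i j assume "i < length I" "j < length I"
  then have "1 \<le> I ! i" "I ! i \<le> n+1" "I ! i \<noteq> a" "1 \<le> J ! j" "J ! j \<le> n+1"
    using len I J a(3) nth_mem by fastforce+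
  then show "(expE n a z * M) $$ (I ! i - 1, J ! j - 1) = M $$ (I ! i - 1, J ! j - 1)"
    using a by (simp add: expE_mult_index[OF M])
qed

lemma minor_expE_mult:
  assumes M: "M \<in> carrier_mat (n+1) (n+1)" and a: "1 \<le> a" "a \<le> n"
    and len: "length J = length I"
    and I: "\<forall>x\<in>set I. 1 \<le> x \<and> x \<le> n+1" "distinct I" and J: "\<forall>x\<in>set J. 1 \<le> x \<and> x \<le> n+1"
    and r: "r < length I" "I ! r = a"
  shows "minor I J (expE n a z * M) = minor I J M + z * minor (I[r := Suc a]) J M"
proof -
  have entry: "(expE n a z * M) $$ (I ! i - 1, J ! j - 1)
      = M $$ (I ! i - 1, J ! j - 1) + (if i = r then z * M $$ (a, J ! j - 1) else 0)"
    if "i < length I" "j < length I" for i j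
  proof -
    have "1 \<le> I ! i" "I ! i \<le> n+1" "1 \<le> J ! j" "J ! j \<le> n+1"
      using that len I(1) J nth_mem by fastforce+
    moreover have "I ! i = a \<longleftrightarrow> i = r"
      using that I(2) r nth_eq_iff_index_eq by metis
    ultimately have "I ! i - 1 = a - 1 \<longleftrightarrow> i = r"
      using a by auto
    with \<open>1 \<le> I ! i\<close> \<open>I ! i \<le> n+1\<close> \<open>1 \<le> J ! j\<close> \<open>J ! j \<le> n+1\<close> show ?thesis
      using a by (simp add: expE_mult_index[OF M])
  qed
  show ?thesis
    unfolding minor_def length_list_update
    by (rule det_linear_row[OF _ _ _ r(1)]) (use entry r in auto)
qed

lemma minor_one:
  assumes len: "length J = length I"
    and I: "\<forall>x\<in>set I. 1 \<le> x \<and> x \<le> n+1" "sorted_wrt (<) I"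
    and J: "\<forall>x\<in>set J. 1 \<le> x \<and> x \<le> n+1" "sorted_wrt (<) J"
  shows "minor I J (1\<^sub>m (n+1)) = (if I = J then 1 else 0)"
proof -
  let ?S = "mat (length I) (length I) (\<lambda>(r, c). (1\<^sub>m (n+1) :: complex mat) $$ (I ! r - 1, J ! c - 1))"
  have entry: "?S $$ (i, j) = (if I ! i = J ! j then 1 else 0)" if "i < length I" "j < length I" for i j
  proof -
    have "1 \<le> I ! i" "I ! i \<le> n+1" "1 \<le> J ! j" "J ! j \<le> n+1"
      using that len I(1) J(1) nth_mem by fastforce+
    then show ?thesis
      using that by auto
  qed
  show ?thesis
  proof (cases "I = J")
    case True
    then have "?S = 1\<^sub>m (length I)"
      using I(2) entry by (auto simp: strict_sorted_iff nth_eq_iff_index_eq)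
    then show ?thesis
      using True by (simp add: minor_def)
  next
    case False
    have "set I \<noteq> set J"
      using False I(2) J(2) by (auto simp: strict_sorted_iff sorted_distinct_set_unique)
    moreover have "card (set I) = card (set J)"
      using I(2) J(2) len by (simp add: strict_sorted_iff distinct_card)
    ultimately obtain x where "x \<in> set I" "x \<notin> set J"
      by (meson card_subset_eq finite_set subsetI)
    then obtain i where i: "i < length I" "I ! i \<notin> set J"
      by (auto simp: in_set_conv_nth)
    have "det ?S = 0"
      using i len entry nth_mem by (intro det_zero_row[of ?S "length I" i]) fastforce+
    then show ?thesis
      using False by (simp add: minor_def)
  qed
qed

section \<open>Values of pistar_alpha on minors\<close>

lemma pistar_alpha_Nil: "pistar_alpha n f [] = f (1\<^sub>m (n+1))"
  by (simp add: pistar_alpha_def wordmat_Nil)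

lemma pistar_alpha_zero: "pistar_alpha n (\<lambda>_. 0) w = 0"
  by (simp add: pistar_alpha_def mixed_deriv_zero)

lemma pistar_alpha_snoc_out_of_range: "a \<notin> {1..n} \<Longrightarrow> pistar_alpha n f (w @ [a]) = 0"
  by (auto simp: pistar_alpha_def)

lemma pistar_alpha_snoc:
  assumes a: "1 \<le> a" "a \<le> n"
    and derivation: "\<And>M z. M \<in> carrier_mat (n+1) (n+1) \<Longrightarrow> f (expE n a z * M) = f M + z * g M"
    and f: "\<And>ws. (\<lambda>s. f (wordmat n ws s)) \<in> poly_fun" and g: "\<And>ws. (\<lambda>s. g (wordmat n ws s)) \<in> poly_fun"
  shows "pistar_alpha n f (w @ [a]) = pistar_alpha n g w"
proof (cases "set w \<subseteq> {1..n}")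
  case False
  then show ?thesis by (simp add: pistar_alpha_def)
next
  case True
  let ?m = "length w"
  have "f (wordmat n (w @ [a]) (s(?m := z))) = f (wordmat n w s) + z * g (wordmat n w s)" for s z
    by (simp add: wordmat_snoc wordmat_fun_upd derivation[OF wordmat_carrier])
  then have "mixed_deriv (Suc ?m) (\<lambda>s. f (wordmat n (w @ [a]) s))
      = deriv (\<lambda>z. mixed_deriv ?m (\<lambda>s. f (wordmat n w s)) + z * mixed_deriv ?m (\<lambda>s. g (wordmat n w s))) 0"
    by (simp add: mixed_deriv_add_scaled f g)
  also have "\<dots> = mixed_deriv ?m (\<lambda>s. g (wordmat n w s))"
    by (rule DERIV_imp_deriv) (auto intro!: derivative_eq_intros)
  finally show ?thesis
    using True a by (simp add: pistar_alpha_def)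
qed

lemma pistar_alpha_minor_snoc:
  assumes a: "1 \<le> a" "a \<le> n" and len: "length J = length I"
    and I: "\<forall>x\<in>set I. 1 \<le> x \<and> x \<le> n+1" "distinct I" and J: "\<forall>x\<in>set J. 1 \<le> x \<and> x \<le> n+1"
    and r: "r < length I" "I ! r = a"
  shows "pistar_alpha n (minor I J) (w @ [a]) = pistar_alpha n (minor (I[r := Suc a]) J) w"
proof (rule pistar_alpha_snoc[OF a])
  show "minor I J (expE n a z * M) = minor I J M + z * minor (I[r := Suc a]) J M"
    if "M \<in> carrier_mat (n+1) (n+1)" for M z
    by (rule minor_expE_mult[OF that a len I J r])
  have "\<forall>x\<in>set (I[r := Suc a]). 1 \<le> x \<and> x \<le> n+1"
    using I(1) a set_update_subset_insert by fastforce
  then show "(\<lambda>s. minor (I[r := Suc a]) J (wordmat n ws s)) \<in> poly_fun" for ws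
    using len J by (intro poly_fun_minor_wordmat) simp_all
qed (rule poly_fun_minor_wordmat[OF len I(1) J])

lemma pistar_alpha_minor_snoc_eq_0:
  assumes a: "a \<notin> set I \<or> Suc a \<in> set I \<or> n < a" and len: "length J = length I"
    and I: "\<forall>x\<in>set I. 1 \<le> x \<and> x \<le> n+1" "distinct I" and J: "\<forall>x\<in>set J. 1 \<le> x \<and> x \<le> n+1"
  shows "pistar_alpha n (minor I J) (w @ [a]) = 0"
proof (cases "a \<in> {1..n}")
  case False
  then show ?thesis
    by (rule pistar_alpha_snoc_out_of_range)
next
  case True
  show ?thesis
  proof (cases "a \<in> set I")
    case False
    then have "pistar_alpha n (minor I J) (w @ [a]) = pistar_alpha n (\<lambda>_. 0) w"
      using True minor_expE_mult_notin[OF _ _ _ False len I(1) J]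
      by (intro pistar_alpha_snoc poly_fun_minor_wordmat[OF len I(1) J]) (auto intro: poly_fun.const)
    then show ?thesis
      by (simp add: pistar_alpha_zero)
  next
    case a_in: True
    then obtain r where r: "r < length I" "I ! r = a"
      by (auto simp: in_set_conv_nth)
    from a a_in True obtain j where j: "j < length I" "I ! j = Suc a"
      by (auto simp: in_set_conv_nth)
    have "j \<noteq> r"
      using r j by auto
    moreover have "I[r := Suc a] ! j = I[r := Suc a] ! r"
      using r j \<open>j \<noteq> r\<close> by simp
    ultimately have "\<not> distinct (I[r := Suc a])"
      using r j nth_eq_iff_index_eq[of "I[r := Suc a]" j r] by auto
    then have "minor (I[r := Suc a]) J = (\<lambda>_. 0)"
      by (auto intro: minor_not_distinct)
    then show ?thesis
      using True pistar_alpha_minor_snoc[OF _ _ len I J r] by (simp add: pistar_alpha_zero)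
  qed
qed

section \<open>Standard tableaux\<close>

lemma sorted_wrt_not_converse_iff:
  assumes irrefl: "\<And>x. \<not> R x x"
  shows "sorted_wrt (\<lambda>u v. \<not> R v u) xs \<longleftrightarrow> (\<forall>p<length xs. \<forall>q<length xs. R (xs ! p) (xs ! q) \<longrightarrow> p < q)"
  unfolding sorted_wrt_iff_nth_less
proof (intro iffI allI impI notI)
  fix p q assume sorted: "\<forall>i j. i < j \<longrightarrow> j < length xs \<longrightarrow> \<not> R (xs ! j) (xs ! i)"
    and "p < length xs" "q < length xs" "R (xs ! p) (xs ! q)"
  then show "p < q"
    using sorted[rule_format, of q p] irrefl by (metis linorder_neqE_nat)
next
  fix i j assume ordered: "\<forall>p<length xs. \<forall>q<length xs. R (xs ! p) (xs ! q) \<longrightarrow> p < q"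
    and ij: "i < j" "j < length xs" and "R (xs ! j) (xs ! i)"
  then have "j < i"
    using ordered[rule_format, of j i] by simp
  with ij show False
    by simp
qed

definition next_cell :: "nat \<times> nat \<Rightarrow> nat \<times> nat \<Rightarrow> bool" where
  "next_cell u v \<longleftrightarrow> v = (Suc (fst u), snd u) \<or> v = (fst u, Suc (snd u))"

definition minimal_cell :: "(nat \<times> nat) set \<Rightarrow> nat \<times> nat \<Rightarrow> bool" where
  "minimal_cell C c \<longleftrightarrow> c \<in> C \<and> (\<forall>u\<in>C. \<not> next_cell u c)"

lemma next_cell_irrefl: "\<not> next_cell u u"
  by (auto simp: next_cell_def prod_eq_iff)

lemma std_tableaux_iff_sorted_wrt:
  "y \<in> std_tableaux C \<longleftrightarrow> distinct y \<and> set y = C \<and> sorted_wrt (\<lambda>u v. \<not> next_cell v u) y"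
proof -
  have "(\<forall>a b p q. p < length y \<and> q < length y \<and> y ! p = (a, b) \<and> y ! q = (a + 1, b) \<longrightarrow> p < q) \<and>
        (\<forall>a b p q. p < length y \<and> q < length y \<and> y ! p = (a, b) \<and> y ! q = (a, b + 1) \<longrightarrow> p < q)
    \<longleftrightarrow> (\<forall>p<length y. \<forall>q<length y. next_cell (y ! p) (y ! q) \<longrightarrow> p < q)"
    (is "?rows \<and> ?cols \<longleftrightarrow> ?ordered")
  proof (intro iffI conjI allI impI)
    fix p q assume H: "?rows \<and> ?cols" and pq: "p < length y" "q < length y"
      and step: "next_cell (y ! p) (y ! q)"
    obtain a b where ab: "y ! p = (a, b)"
      by (cases "y ! p")
    with step have "y ! q = (a + 1, b) \<or> y ! q = (a, b + 1)"
      by (simp add: next_cell_def)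
    then show "p < q"
      using H[THEN conjunct1, rule_format, of p q a b] H[THEN conjunct2, rule_format, of p q a b] pq ab
      by blast
  next
    fix a b p q assume ordered: ?ordered
      and pq: "p < length y \<and> q < length y \<and> y ! p = (a, b) \<and> y ! q = (a + 1, b)"
    from ordered[rule_format, of p q] pq show "p < q"
      by (simp add: next_cell_def)
  next
    fix a b p q assume ordered: ?ordered
      and pq: "p < length y \<and> q < length y \<and> y ! p = (a, b) \<and> y ! q = (a, b + 1)"
    from ordered[rule_format, of p q] pq show "p < q"
      by (simp add: next_cell_def)
  qed
  then show ?thesis
    unfolding std_tableaux_def mem_Collect_eq sorted_wrt_not_converse_iff[OF next_cell_irrefl]
    by (simp only:)
qed

lemma std_tableaux_Cons_iff:
  "c # y \<in> std_tableaux C \<longleftrightarrow> minimal_cell C c \<and> y \<in> std_tableaux (C - {c})"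
proof
  assume "c # y \<in> std_tableaux C"
  then have y: "c \<notin> set y" "insert c (set y) = C" "\<forall>v\<in>set y. \<not> next_cell v c"
    and sorted: "distinct y" "sorted_wrt (\<lambda>u v. \<not> next_cell v u) y"
    by (simp_all add: std_tableaux_iff_sorted_wrt)
  from y have "c \<in> C" "set y = C - {c}"
    by auto
  moreover have "\<forall>u\<in>C. \<not> next_cell u c"
    using y next_cell_irrefl by auto
  ultimately show "minimal_cell C c \<and> y \<in> std_tableaux (C - {c})"
    using sorted by (simp add: minimal_cell_def std_tableaux_iff_sorted_wrt)
next
  assume "minimal_cell C c \<and> y \<in> std_tableaux (C - {c})"
  then have "c \<in> C" "\<forall>u\<in>C. \<not> next_cell u c" "set y = C - {c}"
    and sorted: "distinct y" "sorted_wrt (\<lambda>u v. \<not> next_cell v u) y"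
    by (simp_all add: minimal_cell_def std_tableaux_iff_sorted_wrt)
  then have "c \<notin> set y" "insert c (set y) = C" "\<forall>v\<in>set y. \<not> next_cell v c"
    by auto
  then show "c # y \<in> std_tableaux C"
    using sorted by (simp add: std_tableaux_iff_sorted_wrt)
qed

lemma finite_std_tableaux: "finite C \<Longrightarrow> finite (std_tableaux C)"
  by (rule finite_subset[OF _ finite_subset_distinct[of C]]) (auto simp: std_tableaux_def)

lemma tableau_word_Nil: "tableau_word [] = []"
  by (simp add: tableau_word_def)

lemma tableau_word_Cons: "tableau_word (c # y) = tableau_word y @ [fst c - snd c]"
  by (cases c) (simp add: tableau_word_def)

definition tableau_count :: "(nat \<times> nat) set \<Rightarrow> nat list \<Rightarrow> nat" where
  "tableau_count C w = card {y \<in> std_tableaux C. tableau_word y = w}"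

lemma tableau_count_Nil: "tableau_count C [] = (if C = {} then 1 else 0)"
proof -
  have "{y \<in> std_tableaux C. tableau_word y = []} = (if C = {} then {[]} else {})"
    by (auto simp: tableau_word_def std_tableaux_def)
  then show ?thesis
    by (simp add: tableau_count_def)
qed

lemma tableau_count_snoc:
  assumes "finite C"
  shows "tableau_count C (w @ [a]) = (\<Sum>c | minimal_cell C c \<and> fst c - snd c = a. tableau_count (C - {c}) w)"
proof -
  let ?M = "{c. minimal_cell C c \<and> fst c - snd c = a}"
  let ?T = "\<lambda>c. {y \<in> std_tableaux (C - {c}). tableau_word y = w}"
  have "{y \<in> std_tableaux C. tableau_word y = w @ [a]} = (\<Union>c\<in>?M. Cons c ` ?T c)"
  proof (intro equalityI subsetI)
    fix y assume y: "y \<in> {y \<in> std_tableaux C. tableau_word y = w @ [a]}"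
    then obtain c y' where "y = c # y'"
      by (cases y) (auto simp: tableau_word_Nil)
    with y show "y \<in> (\<Union>c\<in>?M. Cons c ` ?T c)"
      by (intro UN_I[of c]) (auto simp: std_tableaux_Cons_iff tableau_word_Cons)
  qed (auto simp: std_tableaux_Cons_iff tableau_word_Cons)
  then have "tableau_count C (w @ [a]) = card (\<Union>c\<in>?M. Cons c ` ?T c)"
    by (simp add: tableau_count_def)
  also have "\<dots> = (\<Sum>c\<in>?M. card (Cons c ` ?T c))"
    using assms by (intro card_UN_disjoint) (auto simp: minimal_cell_def finite_std_tableaux)
  also have "\<dots> = (\<Sum>c\<in>?M. tableau_count (C - {c}) w)"
    by (simp add: card_image tableau_count_def)
  finally show ?thesis .
qed

lemma sum_wdual_apply:
  assumes "finite Y"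
  shows "(\<Sum>y\<in>Y. wdual (f y)) w = of_nat (card {y \<in> Y. f y = w})"
proof -
  have "(\<Sum>y\<in>Y. wdual (f y)) w = (\<Sum>y\<in>Y. if f y = w then 1 else 0)"
    using assms by (induction Y rule: finite_induct) (simp_all add: wdual_def)
  also have "\<dots> = of_nat (card {y \<in> Y. f y = w})"
    using assms by (simp add: sum.inter_filter[symmetric])
  finally show ?thesis .
qed

section \<open>Skew diagrams\<close>

lemma sorted_Suc_nth_mem_iff:
  assumes sorted: "sorted_wrt (<) (xs :: nat list)" and r: "r < length xs"
  shows "Suc (xs ! r) \<in> set xs \<longleftrightarrow> Suc r < length xs \<and> xs ! Suc r = Suc (xs ! r)"
proof
  assume "Suc (xs ! r) \<in> set xs"
  then obtain j where j: "j < length xs" "xs ! j = Suc (xs ! r)"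
    by (auto simp: in_set_conv_nth)
  have "r < j"
  proof (rule ccontr)
    assume "\<not> r < j"
    then have "j < r"
      using j by (cases "j = r") auto
    then show False
      using sorted_wrt_nth_less[OF sorted, of j r] j r by simp
  qed
  moreover have "\<not> Suc r < j"
    using sorted_wrt_nth_less[OF sorted, of r "Suc r"] sorted_wrt_nth_less[OF sorted, of "Suc r" j] j
    by auto
  ultimately show "Suc r < length xs \<and> xs ! Suc r = Suc (xs ! r)"
    using j by (metis Suc_lessI)
qed (metis nth_mem)

lemma sorted_list_update_Suc:
  assumes sorted: "sorted_wrt (<) (xs :: nat list)" and r: "r < length xs" "Suc (xs ! r) \<notin> set xs"
  shows "sorted_wrt (<) (xs[r := Suc (xs ! r)])"
  unfolding sorted_wrt_iff_nth_less
proof (intro allI impI)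
  fix i j assume ij: "i < j" "j < length (xs[r := Suc (xs ! r)])"
  then have "xs ! i < xs ! j"
    using sorted_wrt_nth_less[OF sorted] by simp
  moreover have "xs ! j \<noteq> Suc (xs ! r)"
    using ij r nth_mem by fastforce
  ultimately show "xs[r := Suc (xs ! r)] ! i < xs[r := Suc (xs ! r)] ! j"
    using ij r by (cases "i = r"; cases "j = r") (simp_all add: nth_list_update)
qed

lemma list_all2_le_update_Suc:
  assumes "r < length xs"
  shows "list_all2 (\<le>) (xs[r := Suc (xs ! r)]) ys \<longleftrightarrow> list_all2 (\<le>) xs ys \<and> xs ! r < ys ! r"
proof -
  have "(\<forall>i<length xs. xs[r := Suc (xs ! r)] ! i \<le> ys ! i) \<longleftrightarrow> (\<forall>i<length xs. xs ! i \<le> ys ! i) \<and> xs ! r < ys ! r"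
  proof
    assume le: "\<forall>i<length xs. xs[r := Suc (xs ! r)] ! i \<le> ys ! i"
    have "xs ! i \<le> ys ! i" if "i < length xs" for i
      using le[rule_format, OF that] assms by (cases "i = r") simp_all
    moreover have "xs ! r < ys ! r"
      using le[rule_format, OF assms] assms by simp
    ultimately show "(\<forall>i<length xs. xs ! i \<le> ys ! i) \<and> xs ! r < ys ! r"
      by blast
  next
    assume le: "(\<forall>i<length xs. xs ! i \<le> ys ! i) \<and> xs ! r < ys ! r"
    show "\<forall>i<length xs. xs[r := Suc (xs ! r)] ! i \<le> ys ! i"
    proof (intro allI impI)
      fix i assume "i < length xs"
      with le show "xs[r := Suc (xs ! r)] ! i \<le> ys ! i"
        by (cases "i = r") simp_all
    qed
  qed
  then show ?thesis
    by (simp add: list_all2_conv_all_nth)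
qed

(* The cell of content e in the part b = k - r of lambda/mu, the one built from i_r and j_r
   (r counted from 0 as a list index). *)
definition skew_cell :: "nat \<Rightarrow> nat \<Rightarrow> nat \<Rightarrow> nat \<times> nat" where
  "skew_cell k r e = (e + (k - r), k - r)"

lemma skew_cells_eq_image:
  assumes "length J = length I"
  shows "skew_cells I J = (\<lambda>(r, e). skew_cell (length I) r e) ` (SIGMA r:{..<length I}. {I ! r..<J ! r})"
proof (intro equalityI subsetI)
  fix c assume c: "c \<in> skew_cells I J"
  obtain x b where xb: "c = (x, b)"
    by (cases c)
  define r where "r = length I - b"
  from c have "1 \<le> b" "b \<le> length I" "I ! r + b - 1 < x" "x \<le> J ! r + b - 1"
    by (simp_all add: skew_cells_def xb assms r_def)
  then have "r < length I" "I ! r \<le> x - b" "x - b < J ! r" "c = skew_cell (length I) r (x - b)"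
    by (auto simp: skew_cell_def r_def xb)
  then show "c \<in> (\<lambda>(r, e). skew_cell (length I) r e) ` (SIGMA r:{..<length I}. {I ! r..<J ! r})"
    by (intro image_eqI[of _ _ "(r, x - b)"]) auto
next
  fix c assume "c \<in> (\<lambda>(r, e). skew_cell (length I) r e) ` (SIGMA r:{..<length I}. {I ! r..<J ! r})"
  then obtain r e where r: "r < length I" "I ! r \<le> e" "e < J ! r" and c: "c = skew_cell (length I) r e"
    by auto
  have "length I - (length I - r) = r"
    using r by simp
  then show "c \<in> skew_cells I J"
    using r assms by (simp add: c skew_cell_def skew_cells_def) arith
qed

lemma skew_cell_eq_iff: "r < k \<Longrightarrow> r' < k \<Longrightarrow> skew_cell k r e = skew_cell k r' e' \<longleftrightarrow> r = r' \<and> e = e'"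
  by (auto simp: skew_cell_def)

lemma content_skew_cell: "fst (skew_cell k r e) - snd (skew_cell k r e) = e"
  by (simp add: skew_cell_def)

lemma next_cell_skew_cell_iff:
  "r < k \<Longrightarrow> r' < k \<Longrightarrow>
    next_cell (skew_cell k r' e') (skew_cell k r e) \<longleftrightarrow> (r' = r \<and> e = Suc e') \<or> (r' = Suc r \<and> e' = Suc e)"
  by (auto simp: next_cell_def skew_cell_def)

lemma finite_skew_cells: "length J = length I \<Longrightarrow> finite (skew_cells I J)"
  by (simp add: skew_cells_eq_image)

lemma skew_cell_mem_iff:
  assumes "length J = length I" "r < length I"
  shows "skew_cell (length I) r e \<in> skew_cells I J \<longleftrightarrow> I ! r \<le> e \<and> e < J ! r"
  using assms by (auto simp: skew_cells_eq_image skew_cell_eq_iff)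

lemma skew_cells_cases:
  assumes "length J = length I" "u \<in> skew_cells I J"
  obtains r e where "r < length I" "I ! r \<le> e" "e < J ! r" "u = skew_cell (length I) r e"
  using assms by (auto simp: skew_cells_eq_image)

lemma bex_skew_cells_iff:
  assumes len: "length J = length I"
  shows "(\<exists>u\<in>skew_cells I J. P u) \<longleftrightarrow> (\<exists>r<length I. \<exists>e. I ! r \<le> e \<and> e < J ! r \<and> P (skew_cell (length I) r e))"
proof
  assume "\<exists>u\<in>skew_cells I J. P u"
  then obtain u where u: "u \<in> skew_cells I J" and "P u"
    by blast
  moreover from len u obtain r e where "r < length I" "I ! r \<le> e" "e < J ! r" "u = skew_cell (length I) r e"
    by (rule skew_cells_cases)
  ultimately show "\<exists>r<length I. \<exists>e. I ! r \<le> e \<and> e < J ! r \<and> P (skew_cell (length I) r e)"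
    by blast
next
  assume "\<exists>r<length I. \<exists>e. I ! r \<le> e \<and> e < J ! r \<and> P (skew_cell (length I) r e)"
  then obtain r e where "r < length I" "I ! r \<le> e" "e < J ! r" and "P (skew_cell (length I) r e)"
    by blast
  moreover from this have "skew_cell (length I) r e \<in> skew_cells I J"
    by (simp add: skew_cell_mem_iff[OF len])
  ultimately show "\<exists>u\<in>skew_cells I J. P u"
    by blast
qed

lemma predecessor_skew_cell_iff:
  assumes len: "length J = length I" and r: "r < length I"
  shows "(\<exists>u\<in>skew_cells I J. next_cell u (skew_cell (length I) r e)) \<longleftrightarrow>
    (I ! r < e \<and> e \<le> J ! r) \<or> (Suc r < length I \<and> I ! Suc r \<le> Suc e \<and> Suc e < J ! Suc r)"
proof -
  have "(\<exists>u\<in>skew_cells I J. next_cell u (skew_cell (length I) r e)) \<longleftrightarrow>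
      (\<exists>e'. I ! r \<le> e' \<and> e' < J ! r \<and> e = Suc e') \<or> (Suc r < length I \<and> I ! Suc r \<le> Suc e \<and> Suc e < J ! Suc r)"
    unfolding bex_skew_cells_iff[OF len] using r by (auto simp: next_cell_skew_cell_iff)
  also have "(\<exists>e'. I ! r \<le> e' \<and> e' < J ! r \<and> e = Suc e') \<longleftrightarrow> I ! r < e \<and> e \<le> J ! r"
    by (cases e) auto
  finally show ?thesis .
qed

lemma minimal_skew_cell_iff:
  assumes len: "length J = length I" and I: "sorted_wrt (<) I" and J: "sorted_wrt (<) J"
    and r: "r < length I"
  shows "minimal_cell (skew_cells I J) (skew_cell (length I) r e) \<longleftrightarrow>
    e = I ! r \<and> I ! r < J ! r \<and> Suc (I ! r) \<notin> set I"
proof -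
  let ?k = "length I"
  have "minimal_cell (skew_cells I J) (skew_cell ?k r e) \<longleftrightarrow> (I ! r \<le> e \<and> e < J ! r) \<and>
      \<not> ((I ! r < e \<and> e \<le> J ! r) \<or> (Suc r < ?k \<and> I ! Suc r \<le> Suc e \<and> Suc e < J ! Suc r))"
    unfolding minimal_cell_def predecessor_skew_cell_iff[OF len r, symmetric] skew_cell_mem_iff[OF len r]
    by blast
  also have "\<dots> \<longleftrightarrow> e = I ! r \<and> I ! r < J ! r \<and> \<not> (Suc r < ?k \<and> I ! Suc r = Suc (I ! r))"
  proof (cases "Suc r < ?k")
    case True
    then have "I ! r < I ! Suc r" "J ! r < J ! Suc r"
      using sorted_wrt_nth_less[OF I, of r "Suc r"] sorted_wrt_nth_less[OF J, of r "Suc r"] len by simp_all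
    then show ?thesis
      by arith
  qed arith
  finally show ?thesis
    using sorted_Suc_nth_mem_iff[OF I r] by simp
qed

lemma minimal_skew_cells_of_content:
  assumes len: "length J = length I" and I: "sorted_wrt (<) I" and J: "sorted_wrt (<) J"
  shows "{c. minimal_cell (skew_cells I J) c \<and> fst c - snd c = a}
    = (\<lambda>r. skew_cell (length I) r a) ` {r. r < length I \<and> I ! r = a \<and> a < J ! r \<and> Suc a \<notin> set I}"
proof (intro equalityI subsetI)
  fix c assume "c \<in> {c. minimal_cell (skew_cells I J) c \<and> fst c - snd c = a}"
  then have c: "minimal_cell (skew_cells I J) c" "fst c - snd c = a"
    by simp_all
  then have "c \<in> skew_cells I J"
    by (simp add: minimal_cell_def)
  with len obtain r e where r: "r < length I" and c_eq: "c = skew_cell (length I) r e"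
    by (rule skew_cells_cases)
  with c have "e = a" "I ! r = a" "a < J ! r" "Suc a \<notin> set I"
    using minimal_skew_cell_iff[OF len I J r] by (simp_all add: content_skew_cell)
  with r c_eq show "c \<in> (\<lambda>r. skew_cell (length I) r a) ` {r. r < length I \<and> I ! r = a \<and> a < J ! r \<and> Suc a \<notin> set I}"
    by blast
next
  fix c assume "c \<in> (\<lambda>r. skew_cell (length I) r a) ` {r. r < length I \<and> I ! r = a \<and> a < J ! r \<and> Suc a \<notin> set I}"
  then obtain r where "r < length I" "I ! r = a" "a < J ! r" "Suc a \<notin> set I" "c = skew_cell (length I) r a"
    by blast
  then show "c \<in> {c. minimal_cell (skew_cells I J) c \<and> fst c - snd c = a}"
    using minimal_skew_cell_iff[OF len I J] by (simp add: content_skew_cell)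
qed

lemma skew_cells_remove_minimal:
  assumes len: "length J = length I" and r: "r < length I"
  shows "skew_cells I J - {skew_cell (length I) r (I ! r)} = skew_cells (I[r := Suc (I ! r)]) J"
proof -
  let ?f = "\<lambda>(r, e). skew_cell (length I) r e"
  let ?S = "SIGMA r':{..<length I}. {I ! r'..<J ! r'}"
  have "inj_on ?f ({..<length I} \<times> UNIV)"
    by (auto simp: inj_on_def skew_cell_eq_iff)
  then have "?f ` (?S - {(r, I ! r)}) = ?f ` ?S - ?f ` {(r, I ! r)}"
    using r by (intro inj_on_image_set_diff) auto
  moreover have "?S - {(r, I ! r)} = (SIGMA r':{..<length I}. {I[r := Suc (I ! r)] ! r'..<J ! r'})"
  proof (intro equalityI subsetI)
    fix p assume p: "p \<in> ?S - {(r, I ! r)}"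
    obtain r' e where pe: "p = (r', e)"
      by (cases p)
    with p have "r' < length I" "I ! r' \<le> e" "e < J ! r'" "r' = r \<longrightarrow> e \<noteq> I ! r"
      by auto
    then show "p \<in> (SIGMA r':{..<length I}. {I[r := Suc (I ! r)] ! r'..<J ! r'})"
      using pe by (cases "r' = r") auto
  next
    fix p assume "p \<in> (SIGMA r':{..<length I}. {I[r := Suc (I ! r)] ! r'..<J ! r'})"
    then obtain r' e where "p = (r', e)" "r' < length I" "I[r := Suc (I ! r)] ! r' \<le> e" "e < J ! r'"
      by auto
    then show "p \<in> ?S - {(r, I ! r)}"
      using r by (cases "r' = r") auto
  qed
  ultimately show ?thesis
    using len by (simp add: skew_cells_eq_image)
qed

lemma tableau_count_skew_snoc:
  assumes len: "length J = length I" and I: "sorted_wrt (<) I" and J: "sorted_wrt (<) J"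
    and r: "r < length I" "I ! r < J ! r" "Suc (I ! r) \<notin> set I"
  shows "tableau_count (skew_cells I J) (w @ [I ! r]) = tableau_count (skew_cells (I[r := Suc (I ! r)]) J) w"
proof -
  have "{r'. r' < length I \<and> I ! r' = I ! r \<and> I ! r < J ! r' \<and> Suc (I ! r) \<notin> set I} = {r}"
    using r I by (auto simp: strict_sorted_iff nth_eq_iff_index_eq)
  then have "{c. minimal_cell (skew_cells I J) c \<and> fst c - snd c = I ! r} = {skew_cell (length I) r (I ! r)}"
    by (simp add: minimal_skew_cells_of_content[OF len I J])
  then show ?thesis
    by (simp add: tableau_count_snoc finite_skew_cells[OF len] skew_cells_remove_minimal[OF len r(1)])
qed

lemma tableau_count_skew_snoc_eq_0:
  assumes len: "length J = length I" and I: "sorted_wrt (<) I" and J: "sorted_wrt (<) J"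
    and no_cell: "\<not> (\<exists>r<length I. I ! r = a \<and> a < J ! r \<and> Suc a \<notin> set I)"
  shows "tableau_count (skew_cells I J) (w @ [a]) = 0"
proof -
  have "{r. r < length I \<and> I ! r = a \<and> a < J ! r \<and> Suc a \<notin> set I} = {}"
    using no_cell by blast
  then have "{c. minimal_cell (skew_cells I J) c \<and> fst c - snd c = a} = {}"
    by (simp only: minimal_skew_cells_of_content[OF len I J] image_empty)
  then show ?thesis
    unfolding tableau_count_snoc[OF finite_skew_cells[OF len]] by (simp only: sum.empty)
qed

lemma tableau_count_skew_Nil:
  assumes le: "list_all2 (\<le>) I J"
  shows "tableau_count (skew_cells I J) [] = (if I = J then 1 else 0)"
proof -
  have len: "length J = length I"
    using le by (simp add: list_all2_lengthD)
  have "skew_cells I J = {} \<longleftrightarrow> (\<forall>r<length I. J ! r \<le> I ! r)"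
    unfolding skew_cells_eq_image[OF len] image_is_empty Sigma_empty_iff by (simp add: not_less Ball_def)
  also have "\<dots> \<longleftrightarrow> I = J"
  proof
    assume ge: "\<forall>r<length I. J ! r \<le> I ! r"
    have "I ! r = J ! r" if "r < length I" for r
      using le ge that by (simp add: list_all2_conv_all_nth le_antisym)
    with len show "I = J"
      by (simp add: nth_equalityI)
  qed simp
  finally show ?thesis
    by (simp add: tableau_count_Nil)
qed

(* Extended by 0 to pairs with some i_r > j_r, since the recursion skew_tableau_count_snoc can
   raise i_r past j_r. *)
definition skew_tableau_count :: "nat list \<Rightarrow> nat list \<Rightarrow> nat list \<Rightarrow> nat" where
  "skew_tableau_count I J w = (if list_all2 (\<le>) I J then tableau_count (skew_cells I J) w else 0)"

lemma skew_tableau_count_Nil: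
  assumes "length J = length I"
  shows "skew_tableau_count I J [] = (if I = J then 1 else 0)"
  using assms by (auto simp: skew_tableau_count_def tableau_count_skew_Nil list_all2_refl)

lemma skew_tableau_count_snoc:
  assumes len: "length J = length I" and I: "sorted_wrt (<) I" and J: "sorted_wrt (<) J"
    and r: "r < length I" "I ! r = a" "Suc a \<notin> set I"
  shows "skew_tableau_count I J (w @ [a]) = skew_tableau_count (I[r := Suc a]) J w"
proof (cases "list_all2 (\<le>) I J \<and> a < J ! r")
  case True
  then show ?thesis
    using tableau_count_skew_snoc[OF len I J r(1)] list_all2_le_update_Suc[OF r(1)] r
    by (simp add: skew_tableau_count_def)
next
  case False
  have "\<not> list_all2 (\<le>) (I[r := Suc a]) J"
    using False list_all2_le_update_Suc[OF r(1)] r(2) by simp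
  moreover have "\<not> (\<exists>r'<length I. I ! r' = a \<and> a < J ! r' \<and> Suc a \<notin> set I)" if "list_all2 (\<le>) I J"
    using False that r I by (metis strict_sorted_iff nth_eq_iff_index_eq)
  ultimately show ?thesis
    using tableau_count_skew_snoc_eq_0[OF len I J] by (simp add: skew_tableau_count_def)
qed

lemma skew_tableau_count_snoc_eq_0:
  assumes len: "length J = length I" and I: "sorted_wrt (<) I" and J: "sorted_wrt (<) J"
    and a: "a \<notin> set I \<or> Suc a \<in> set I \<or> (\<forall>x\<in>set J. x \<le> a)"
  shows "skew_tableau_count I J (w @ [a]) = 0"
proof -
  have "\<not> (\<exists>r<length I. I ! r = a \<and> a < J ! r \<and> Suc a \<notin> set I)"
  proof
    assume "\<exists>r<length I. I ! r = a \<and> a < J ! r \<and> Suc a \<notin> set I"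
    then obtain r where r: "r < length I" "I ! r = a" "a < J ! r" "Suc a \<notin> set I"
      by blast
    moreover have "a \<in> set I" "J ! r \<in> set J"
      using r(1,2) len nth_mem by (metis, metis)
    ultimately show False
      using a by auto
  qed
  then show ?thesis
    using tableau_count_skew_snoc_eq_0[OF len I J] by (simp add: skew_tableau_count_def)
qed

lemma pistar_alpha_minor_eq_skew_tableau_count:
  assumes J: "sorted_wrt (<) J" "\<forall>x\<in>set J. 1 \<le> x \<and> x \<le> n+1"
  shows "length J = length I \<Longrightarrow> sorted_wrt (<) I \<Longrightarrow> \<forall>x\<in>set I. 1 \<le> x \<and> x \<le> n+1 \<Longrightarrow>
    pistar_alpha n (minor I J) w = of_nat (skew_tableau_count I J w)"
proof (induction w arbitrary: I rule: rev_induct)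
  case Nil
  then show ?case
    using minor_one[OF Nil.prems(1) Nil.prems(3) Nil.prems(2) J(2) J(1)]
    by (simp add: pistar_alpha_Nil skew_tableau_count_Nil)
next
  case (snoc a w)
  note len = snoc.prems(1) and I = snoc.prems(2,3)
  have distinct: "distinct I"
    using I(1) by (simp add: strict_sorted_iff)
  consider (stuck) "a \<notin> set I \<or> Suc a \<in> set I \<or> n < a"
    | (move) r where "r < length I" "I ! r = a" "Suc a \<notin> set I" "a \<le> n"
    by (metis in_set_conv_nth not_le)
  then show ?case
  proof cases
    case stuck
    have "\<forall>x\<in>set J. x \<le> a" if "n < a"
      using J(2) that by fastforce
    with stuck have "skew_tableau_count I J (w @ [a]) = 0"
      by (intro skew_tableau_count_snoc_eq_0[OF len I(1) J(1)]) blast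
    then show ?thesis
      using pistar_alpha_minor_snoc_eq_0[OF stuck len I(2) distinct J(2)] by simp
  next
    case move
    let ?I' = "I[r := Suc a]"
    have "1 \<le> a"
      using move I(2) nth_mem by fastforce
    have "pistar_alpha n (minor I J) (w @ [a]) = pistar_alpha n (minor ?I' J) w"
      by (rule pistar_alpha_minor_snoc[OF \<open>1 \<le> a\<close> move(4) len I(2) distinct J(2) move(1,2)])
    also have "\<dots> = of_nat (skew_tableau_count ?I' J w)"
    proof (rule snoc.IH)
      show "length J = length ?I'"
        using len by simp
      show "sorted_wrt (<) ?I'"
        using sorted_list_update_Suc[OF I(1) move(1)] move(2,3) by simp
      show "\<forall>x\<in>set ?I'. 1 \<le> x \<and> x \<le> n+1"
        using I(2) move(4) set_update_subset_insert by fastforce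
    qed
    also have "\<dots> = of_nat (skew_tableau_count I J (w @ [a]))"
      using skew_tableau_count_snoc[OF len I(1) J(1) move(1-3)] by simp
    finally show ?thesis .
  qed
qed

theorem mainTheorem11:
  fixes n :: nat and I J :: "nat list"
  assumes "n \<ge> 1"
    and "length I = length J" and "length I \<ge> 1"
    and "sorted_wrt (<) I" and "sorted_wrt (<) J"
    and "\<forall>x\<in>set I. 1 \<le> x \<and> x \<le> n + 1"
    and "\<forall>x\<in>set J. 1 \<le> x \<and> x \<le> n + 1"
    and "\<forall>r<length I. I ! r \<le> J ! r"
  shows "pistar_alpha n (minor I J) =
           (\<Sum>y\<in>std_tableaux (skew_cells I J). wdual (tableau_word y))"
proof
  fix w
  have "list_all2 (\<le>) I J"
    using assms(2,8) by (simp add: list_all2_conv_all_nth)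
  then have "pistar_alpha n (minor I J) w = of_nat (tableau_count (skew_cells I J) w)"
    using pistar_alpha_minor_eq_skew_tableau_count[OF assms(5,7)] assms(2,4,6)
    by (simp add: skew_tableau_count_def)
  also have "\<dots> = (\<Sum>y\<in>std_tableaux (skew_cells I J). wdual (tableau_word y)) w"
    using assms(2) by (simp add: sum_wdual_apply finite_std_tableaux finite_skew_cells tableau_count_def)
  finally show "pistar_alpha n (minor I J) w = (\<Sum>y\<in>std_tableaux (skew_cells I J). wdual (tableau_word y)) w" .
qed

end
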